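(* Let $(S,T_1,*,\equiv',1',\sigma_1',\bar\sigma_1')$ be a link model. Then there is a well-defined map $f:B_\infty\to S$ satisfying $f(1)=1'$, $f(\sigma_i)=T_1^{i-1}(\sigma_1')$ for all $i\in\mathbb{N}$ (with $T_1^0$ the identity), and $f(b_1\cdot b_2)=f(b_1)*f(b_2)$ for all $b_1,b_2\in B_\infty$.
   Context: Consider a first-order language with signature $(\cdot,T,\equiv,1,\sigma,\bar\sigma)$: $\cdot$ binary function, $T$ unary function, $\equiv$ binary predicate, constants $1,\sigma,\bar\sigma$. The link axioms are: $\forall x,y,z\ x\cdot(y\cdot z)=(x\cdot y)\cdot z$; $\forall x\ 1\cdot x=x$; $\forall x\ x\cdot 1=x$; $\sigma\cdot\bar\sigma=\bar\sigma\cdot\sigma=1$; $\forall x,y\ T(x\cdot y)=T(x)\cdot T(y)$; $T(1)=1$; $\sigma\cdot T(\sigma)\cdot\sigma=T(\sigma)\cdot\sigma\cdot T(\sigma)$; $\forall b\ \sigma\cdot T(T(b))=T(T(b))\cdot\sigma$; $\equiv$ is reflexive, symmetric and transitive; $\forall x,y,z\ (y\cdot z=1\to x\equiv y\cdot x\cdot z)$; $\forall x\ x\equiv\sigma\cdot T(x)$; $\forall x\ x\equiv\bar\sigma\cdot T(x)$. A link model is a structure satisfying these axioms; in $(S,T_1,*,\equiv',1',\sigma_1',\bar\sigma_1')$ the symbols $\cdot,T,\equiv,1,\sigma,\bar\sigma$ are interpreted by $*,T_1,\equiv',1',\sigma_1',\bar\sigma_1'$. $B_\infty$ is the group generated by $\{\sigma_i\}_{i\in\mathbb{N}}$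 with relations $\sigma_i\sigma_j=\sigma_j\sigma_i$ for $i\ge j+2$ and $\sigma_i\sigma_{i+1}\sigma_i=\sigma_{i+1}\sigma_i\sigma_{i+1}$. *)

theory Defs
  imports Main
begin

definition link_model ::
  "('a \<Rightarrow> 'a \<Rightarrow> 'a) \<Rightarrow> ('a \<Rightarrow> 'a) \<Rightarrow> ('a \<Rightarrow> 'a \<Rightarrow> bool) \<Rightarrow> 'a \<Rightarrow> 'a \<Rightarrow> 'a \<Rightarrow> bool" where
  "link_model mult T eqv one sig sigb \<longleftrightarrow>
     (\<forall>x y z. mult x (mult y z) = mult (mult x y) z) \<and>
     (\<forall>x. mult one x = x) \<and>
     (\<forall>x. mult x one = x) \<and>
     mult sig sigb = one \<and> mult sigb sig = one \<and>
     (\<forall>x y. T (mult x y) = mult (T x) (T y)) \<and>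
     T one = one \<and>
     mult (mult sig (T sig)) sig = mult (mult (T sig) sig) (T sig) \<and>
     (\<forall>b. mult sig (T (T b)) = mult (T (T b)) sig) \<and>
     (\<forall>x. eqv x x) \<and>
     (\<forall>x y. eqv x y \<longrightarrow> eqv y x) \<and>
     (\<forall>x y z. eqv x y \<longrightarrow> eqv y z \<longrightarrow> eqv x z) \<and>
     (\<forall>x y z. mult y z = one \<longrightarrow> eqv x (mult (mult y x) z)) \<and>
     (\<forall>x. eqv x (mult sig (T x))) \<and>
     (\<forall>x. eqv x (mult sigb (T x)))"

text \<open>A letter (k, True) stands for sigma_(k+1), (k, False) for its inverse.\<close>

type_synonym bword = "(nat \<times> bool) list"

inductive braid_eq :: "bword \<Rightarrow> bword \<Rightarrow> bool" where
  refl: "braid_eq w w"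
| sym: "braid_eq v w \<Longrightarrow> braid_eq w v"
| trans: "braid_eq u v \<Longrightarrow> braid_eq v w \<Longrightarrow> braid_eq u w"
| ctxt: "braid_eq v w \<Longrightarrow> braid_eq (p @ v @ q) (p @ w @ q)"
| cancel: "braid_eq [(k, b), (k, \<not> b)] []"
| far: "i \<ge> j + 2 \<Longrightarrow> braid_eq [(i, True), (j, True)] [(j, True), (i, True)]"
| braid: "braid_eq [(i, True), (Suc i, True), (i, True)] [(Suc i, True), (i, True), (Suc i, True)]"

lemma equivp_braid_eq: "equivp braid_eq"
  by (intro equivpI reflpI sympI transpI) (auto intro: braid_eq.intros)

quotient_type braid = bword / braid_eq
  by (rule equivp_braid_eq)

lift_definition braid_one :: braid is "[]" .

lift_definition braid_mult :: "braid \<Rightarrow> braid \<Rightarrow> braid" is "(@)"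
proof -
  fix a b c d :: bword
  assume h1: "braid_eq a b" and h2: "braid_eq c d"
  have "braid_eq ([] @ a @ c) ([] @ b @ c)" using h1 by (rule braid_eq.ctxt)
  moreover have "braid_eq (b @ c @ []) (b @ d @ [])" using h2 by (rule braid_eq.ctxt)
  ultimately show "braid_eq (a @ c) (b @ d)" by (auto intro: braid_eq.trans)
qed

lift_definition braid_gen :: "nat \<Rightarrow> braid" is "\<lambda>i. [(i - 1, True)]" .

end

theory Submission
  imports Defs
begin

text \<open>Sending \<sigma>_i to T^(i-1) \<sigma> respects the defining relations of B_\<infinity>: the
  inverse relations because every power of T is a monoid endomorphism, the braid relation
  by applying T^(i-1) to the axiom for \<sigma> and T \<sigma>, and far commutation because for
  i \<ge> j + 2 the image of \<sigma>_i is T^(j-1) applied to an element of the form T (T b), which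
  commutes with \<sigma>.\<close>

locale braid_representation = monoid +
  fixes T :: "'a \<Rightarrow> 'a" and s sb :: 'a
  assumes s_sb: "s \<^bold>* sb = \<^bold>1" and sb_s: "sb \<^bold>* s = \<^bold>1"
    and T_mult: "T (x \<^bold>* y) = T x \<^bold>* T y" and T_one: "T \<^bold>1 = \<^bold>1"
    and braid_rel: "s \<^bold>* T s \<^bold>* s = T s \<^bold>* s \<^bold>* T s"
    and far_commute: "s \<^bold>* T (T b) = T (T b) \<^bold>* s"
begin

lemma funpow_T_mult: "(T ^^ k) (x \<^bold>* y) = (T ^^ k) x \<^bold>* (T ^^ k) y"
  by (induction k) (simp_all add: T_mult)

lemma funpow_T_one: "(T ^^ k) \<^bold>1 = \<^bold>1"
  by (induction k) (simp_all add: T_one)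

lemma funpow_T_s_sb: "(T ^^ k) s \<^bold>* (T ^^ k) sb = \<^bold>1"
  and funpow_T_sb_s: "(T ^^ k) sb \<^bold>* (T ^^ k) s = \<^bold>1"
  by (simp_all only: funpow_T_mult[symmetric] s_sb sb_s funpow_T_one)

lemma funpow_T_braid_rel:
  "(T ^^ i) s \<^bold>* (T ^^ Suc i) s \<^bold>* (T ^^ i) s = (T ^^ Suc i) s \<^bold>* (T ^^ i) s \<^bold>* (T ^^ Suc i) s"
proof -
  have "(T ^^ Suc i) s = (T ^^ i) (T s)"
    by (simp only: funpow_Suc_right comp_def)
  then show ?thesis
    using arg_cong[OF braid_rel, of "T ^^ i"] by (simp only: funpow_T_mult)
qed

lemma funpow_T_far_commute:
  assumes "i \<ge> j + 2"
  shows "(T ^^ i) s \<^bold>* (T ^^ j) s = (T ^^ j) s \<^bold>* (T ^^ i) s"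
proof -
  obtain d where "i = j + 2 + d" using le_Suc_ex[OF assms] by blast
  then have "(T ^^ i) s = (T ^^ j) (T (T ((T ^^ d) s)))"
    by (simp only: funpow_add comp_apply numeral_2_eq_2 funpow.simps id_apply)
  then show ?thesis
    by (simp only: funpow_T_mult[symmetric] far_commute)
qed

fun eval_word :: "bword \<Rightarrow> 'a" where
  "eval_word [] = \<^bold>1"
| "eval_word ((k, b) # w) = (T ^^ k) (if b then s else sb) \<^bold>* eval_word w"

lemma eval_word_append: "eval_word (v @ w) = eval_word v \<^bold>* eval_word w"
  by (induction v) (auto simp: assoc)

lemma eval_word_respects_braid_eq: "braid_eq v w \<Longrightarrow> eval_word v = eval_word w"
proof (induction rule: braid_eq.induct)
  case (ctxt v w p q)
  then show ?case by (simp add: eval_word_append)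
next
  case (cancel k b)
  show ?case by (simp add: funpow_T_s_sb funpow_T_sb_s)
next
  case (far i j)
  show ?case by (simp add: funpow_T_far_commute[OF far.hyps])
next
  case (braid i)
  show ?case using funpow_T_braid_rel by (simp add: assoc)
qed simp_all

lift_definition eval_braid :: "braid \<Rightarrow> 'a" is eval_word
  by (rule eval_word_respects_braid_eq)

lemma eval_braid_one: "eval_braid braid_one = \<^bold>1"
  by transfer simp

lemma eval_braid_gen: "eval_braid (braid_gen i) = (T ^^ (i - 1)) s"
  by transfer simp

lemma eval_braid_mult: "eval_braid (braid_mult b1 b2) = eval_braid b1 \<^bold>* eval_braid b2"
  by transfer (rule eval_word_append)

end

lemma link_model_braid_representation:
  assumes "link_model mult T eqv one sig sigb"
  shows "braid_representation mult one T sig sigb"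
  using assms unfolding link_model_def
  by unfold_locales (simp_all add: ac_simps)

theorem lemma6p3:
  fixes mult :: "'a \<Rightarrow> 'a \<Rightarrow> 'a" and T :: "'a \<Rightarrow> 'a" and eqv :: "'a \<Rightarrow> 'a \<Rightarrow> bool"
    and one sig sigb :: 'a
  assumes "link_model mult T eqv one sig sigb"
  shows "\<exists>f :: braid \<Rightarrow> 'a.
           f braid_one = one \<and>
           (\<forall>i::nat. i \<ge> 1 \<longrightarrow> f (braid_gen i) = (T ^^ (i - 1)) sig) \<and>
           (\<forall>b1 b2. f (braid_mult b1 b2) = mult (f b1) (f b2))"
proof -
  interpret braid_representation mult one T sig sigb
    using assms by (rule link_model_braid_representation)
  show ?thesis
    using eval_braid_one eval_braid_gen eval_braid_mult by blast
qed

end
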